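(* Let $\vec d=(\vec a,\vec b)$ be a bidegree sequence of length $n$ with $\sum_i a_i=\sum_i b_i=n\bar c$, and let $M=\max\vec d$ with $M<n$. (i) If $k:=\#\{i: a_i=M\}$ satisfies $M<k$, then $\vec d$ is graphic. (ii) More generally, if there is $k\in\mathbb{N}$ with $M<k$ and $Mk\le n\bar c$, then $\vec d$ is graphic.
   Context: A bidegree sequence of length $n$ is a pair $\vec d=(\vec a,\vec b)$ with $\vec a=(a_1,\dots,a_n)\in\mathbb{N}_0^n$ and $\vec b=(b_1,\dots,b_n)\in\mathbb{N}_0^n$. It is graphic with loops if there is an $n\times n$ matrix with entries in $\{0,1\}$ whose $i$th row sum is $a_i$ and whose $i$th column sum is $b_i$ for every $i\in[1..n]$; it is graphic if such a matrix exists with all diagonal entries equal to $0$. $\max\vec d$ and $\min\vec d$ denote the maximum and minimum over all $2n$ entries $a_1,\dots,a_n,b_1,\dots,b_n$. The number $\bar c$ (the average degree) is defined by $\sum_i a_i=\sum_i b_i=n\bar c$. *)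

theory Defs
  imports Main
begin

(* A bidegree sequence of length n is a pair of functions a b :: nat => nat,
   only the values at indices 0..n-1 matter. *)

definition graphic_with_loops :: "nat \<Rightarrow> (nat \<Rightarrow> nat) \<Rightarrow> (nat \<Rightarrow> nat) \<Rightarrow> bool" where
  "graphic_with_loops n a b \<longleftrightarrow>
     (\<exists>A :: nat \<Rightarrow> nat \<Rightarrow> nat.
        (\<forall>i<n. \<forall>j<n. A i j \<in> {0, 1}) \<and>
        (\<forall>i<n. (\<Sum>j<n. A i j) = a i) \<and>
        (\<forall>j<n. (\<Sum>i<n. A i j) = b j))"

definition graphic :: "nat \<Rightarrow> (nat \<Rightarrow> nat) \<Rightarrow> (nat \<Rightarrow> nat) \<Rightarrow> bool" where
  "graphic n a b \<longleftrightarrow>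
     (\<exists>A :: nat \<Rightarrow> nat \<Rightarrow> nat.
        (\<forall>i<n. \<forall>j<n. A i j \<in> {0, 1}) \<and>
        (\<forall>i<n. A i i = 0) \<and>
        (\<forall>i<n. (\<Sum>j<n. A i j) = a i) \<and>
        (\<forall>j<n. (\<Sum>i<n. A i j) = b j))"

definition max_bideg :: "nat \<Rightarrow> (nat \<Rightarrow> nat) \<Rightarrow> (nat \<Rightarrow> nat) \<Rightarrow> nat" where
  "max_bideg n a b = Max (a ` {..<n} \<union> b ` {..<n})"

end

theory Submission
  imports Defs
begin

text \<open>
  Take a loopless 0/1 matrix whose row and column sums are bounded by \<open>a\<close> and \<open>b\<close> and whose
  total is maximal. If some row were unsaturated, let \<open>X\<close> be the rows reachable from it by
  alternating paths (a zero entry leads from a row to a column, a one entry back to a row) and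
  \<open>Y\<close> the columns with a free off-diagonal slot in \<open>X\<close>. Maximality saturates every column of
  \<open>Y\<close>, since otherwise flipping the entries along an alternating path raises the total; the rows
  outside \<open>X\<close> are saturated, they have no ones in \<open>Y\<close>, and \<open>X \<times> Z\<close> is full off the diagonal,
  where \<open>Z\<close> is the complement of \<open>Y\<close>. Double counting the ones in the rows of \<open>X\<close> then gives
  \<open>|X| |Z| - |X \<inter> Z| + b(Y) < a(X)\<close>, and together with \<open>a(X) \<le> min (|X| M) S\<close> and
  \<open>b(Z) \<le> |Z| M\<close> this forces \<open>S < M (M + 1)\<close>. Both hypotheses of the corollary give
  \<open>M (M + 1) \<le> S\<close>.
\<close>

definition row_sum :: "nat \<Rightarrow> (nat \<Rightarrow> nat \<Rightarrow> nat) \<Rightarrow> nat \<Rightarrow> nat" where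
  "row_sum n A i = (\<Sum>j<n. A i j)"

definition col_sum :: "nat \<Rightarrow> (nat \<Rightarrow> nat \<Rightarrow> nat) \<Rightarrow> nat \<Rightarrow> nat" where
  "col_sum n A j = (\<Sum>i<n. A i j)"

definition total :: "nat \<Rightarrow> (nat \<Rightarrow> nat \<Rightarrow> nat) \<Rightarrow> nat" where
  "total n A = (\<Sum>i<n. row_sum n A i)"

definition loopless_01 :: "nat \<Rightarrow> (nat \<Rightarrow> nat \<Rightarrow> nat) \<Rightarrow> bool" where
  "loopless_01 n A \<longleftrightarrow> (\<forall>i<n. \<forall>j<n. A i j \<le> 1) \<and> (\<forall>i<n. A i i = 0)"

lemma total_eq_sum_col_sum: "total n A = (\<Sum>j<n. col_sum n A j)"
  unfolding total_def row_sum_def col_sum_def by (rule sum.swap)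

lemma graphicI:
  assumes "loopless_01 n A" "\<And>i. i < n \<Longrightarrow> row_sum n A i = a i"
    "\<And>j. j < n \<Longrightarrow> col_sum n A j = b j"
  shows "graphic n a b"
  using assms unfolding graphic_def loopless_01_def row_sum_def col_sum_def
  by (metis insert_iff le_Suc_eq le_zero_eq One_nat_def)

lemma row_sum_add_unit:
  assumes "j < n"
  shows "row_sum n (\<lambda>p q. A p q + of_bool (p = i \<and> q = j)) p = row_sum n A p + of_bool (p = i)"
  using assms by (simp add: row_sum_def sum.distrib)

lemma col_sum_add_unit:
  assumes "i < n"
  shows "col_sum n (\<lambda>p q. A p q + of_bool (p = i \<and> q = j)) q = col_sum n A q + of_bool (q = j)"
  using assms by (simp add: col_sum_def sum.distrib)

definition augments :: "nat \<Rightarrow> (nat \<Rightarrow> nat \<Rightarrow> nat) \<Rightarrow> (nat \<Rightarrow> nat \<Rightarrow> nat) \<Rightarrow> nat \<Rightarrow> nat \<Rightarrow> bool" where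
  "augments n A A' i j \<longleftrightarrow> loopless_01 n A'
     \<and> (\<forall>p<n. row_sum n A' p = row_sum n A p + of_bool (p = i))
     \<and> (\<forall>q<n. col_sum n A' q = col_sum n A q + of_bool (q = j))"

lemma total_augments:
  assumes "augments n A A' i j" "i < n"
  shows "total n A' = total n A + 1"
  using assms by (simp add: augments_def total_def sum.distrib)

lemma augments_set_entry:
  assumes "loopless_01 n A" "i < n" "j < n" "i \<noteq> j" "A i j = 0"
  shows "augments n A (\<lambda>p q. A p q + of_bool (p = i \<and> q = j)) i j"
  using assms by (auto simp: augments_def loopless_01_def row_sum_add_unit col_sum_add_unit)

lemma augments_shift_column:
  assumes aug: "augments n A A' i0 j'" and "i < n" "j < n" "j' < n" "i \<noteq> j"
    and "A' i j' = 1" "A' i j = 0"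
  shows "augments n A (\<lambda>p q. if p = i \<and> q = j then 1 else if p = i \<and> q = j' then 0 else A' p q) i0 j"
    (is "augments n A ?A'' i0 j")
proof -
  have shift: "(\<lambda>p q. ?A'' p q + of_bool (p = i \<and> q = j')) = (\<lambda>p q. A' p q + of_bool (p = i \<and> q = j))"
    using assms by (auto simp: fun_eq_iff)
  have "row_sum n ?A'' p = row_sum n A' p" for p
    using row_sum_add_unit[of j' n ?A'' i p] row_sum_add_unit[of j n A' i p] \<open>j < n\<close> \<open>j' < n\<close>
    by (simp add: shift)
  moreover have "col_sum n ?A'' q = col_sum n A q + of_bool (q = j)" if "q < n" for q
  proof -
    have "col_sum n ?A'' q + of_bool (q = j') = col_sum n A' q + of_bool (q = j)"
      using col_sum_add_unit[of i n ?A'' j' q] col_sum_add_unit[of i n A' j q] \<open>i < n\<close>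
      by (simp add: shift)
    then show ?thesis
      using aug \<open>q < n\<close> by (simp add: augments_def)
  qed
  moreover have "loopless_01 n ?A''"
    using aug \<open>i \<noteq> j\<close> by (auto simp: augments_def loopless_01_def)
  ultimately show ?thesis
    using aug by (simp add: augments_def)
qed

lemma block_count:
  assumes A: "loopless_01 n A" and X: "X \<subseteq> {..<n}" and Y: "Y \<subseteq> {..<n}"
    and ones: "\<And>i j. i \<in> X \<Longrightarrow> j < n \<Longrightarrow> j \<notin> Y \<Longrightarrow> i \<noteq> j \<Longrightarrow> A i j = 1"
    and zeros: "\<And>i j. i < n \<Longrightarrow> i \<notin> X \<Longrightarrow> j \<in> Y \<Longrightarrow> A i j = 0"
  defines "Z \<equiv> {..<n} - Y"
  shows "(\<Sum>i\<in>X. row_sum n A i) + card (X \<inter> Z) = (\<Sum>j\<in>Y. col_sum n A j) + card X * card Z"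
proof -
  have fin: "finite X" "finite Y" "finite Z"
    using X Y finite_subset unfolding Z_def by auto
  have split: "row_sum n A i = (\<Sum>j\<in>Y. A i j) + (\<Sum>j\<in>Z. A i j)" for i
  proof -
    have "{..<n} = Y \<union> Z" "Y \<inter> Z = {}" using Y unfolding Z_def by auto
    then show ?thesis unfolding row_sum_def using fin by (simp add: sum.union_disjoint)
  qed
  have "(\<Sum>i\<in>X. A i j) = col_sum n A j" if "j \<in> Y" for j
  proof -
    have "col_sum n A j = (\<Sum>i\<in>{..<n} - X. A i j) + (\<Sum>i\<in>X. A i j)"
      unfolding col_sum_def using X by (intro sum.subset_diff) auto
    with zeros[OF _ _ that] show ?thesis by simp
  qed
  then have Y_part: "(\<Sum>i\<in>X. \<Sum>j\<in>Y. A i j) = (\<Sum>j\<in>Y. col_sum n A j)"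
    by (subst sum.swap) simp
  have "(\<Sum>j\<in>Z. A i j) + of_bool (i \<in> Z) = card Z" if "i \<in> X" for i
  proof -
    have "A i j + of_bool (j = i) = 1" if "j \<in> Z" for j
      using ones[OF \<open>i \<in> X\<close>, of j] A X \<open>i \<in> X\<close> that
      by (cases "j = i") (auto simp: Z_def loopless_01_def)
    then have "(\<Sum>j\<in>Z. A i j + of_bool (j = i)) = card Z" by simp
    then show ?thesis using fin by (simp add: sum.distrib Int_insert_right split: if_splits)
  qed
  then have "(\<Sum>i\<in>X. (\<Sum>j\<in>Z. A i j) + of_bool (i \<in> Z)) = card X * card Z"
    by simp
  then have "(\<Sum>i\<in>X. \<Sum>j\<in>Z. A i j) + card (X \<inter> Z) = card X * card Z"
    using fin by (simp add: sum.distrib Int_def)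
  then show ?thesis
    by (simp add: split sum.distrib Y_part)
qed

locale partial_realization =
  fixes n :: nat and a b :: "nat \<Rightarrow> nat" and A :: "nat \<Rightarrow> nat \<Rightarrow> nat"
  assumes loopless: "loopless_01 n A"
    and row_sum_le: "\<And>i. i < n \<Longrightarrow> row_sum n A i \<le> a i"
    and col_sum_le: "\<And>j. j < n \<Longrightarrow> col_sum n A j \<le> b j"
begin

definition free_cols :: "nat set \<Rightarrow> nat set" where
  "free_cols R = {j. j < n \<and> (\<exists>i\<in>R. i \<noteq> j \<and> A i j = 0)}"

primrec reached_rows :: "nat \<Rightarrow> nat set" where
  "reached_rows 0 = {i. i < n \<and> row_sum n A i < a i}"
| "reached_rows (Suc k) =
     reached_rows k \<union> {i. i < n \<and> (\<exists>j\<in>free_cols (reached_rows k). A i j = 1)}"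

lemma reached_rows_subset: "reached_rows k \<subseteq> {..<n}"
  by (induction k) auto

lemma mono_reached_rows: "mono reached_rows"
  unfolding mono_iff_le_Suc by auto

lemma reached_rows_stable: "\<exists>N. reached_rows (Suc N) = reached_rows N"
proof -
  have "range reached_rows \<subseteq> Pow {..<n}"
    using reached_rows_subset by blast
  then have "finite (range reached_rows)"
    by (rule finite_subset) simp
  moreover have "reached_rows (Suc (Suc k)) = reached_rows (Suc k)"
    if "reached_rows k = reached_rows (Suc k)" for k
    using that by simp
  ultimately obtain N where "\<forall>k\<ge>N. reached_rows N = reached_rows k"
    using finite_mono_remains_stable_implies_strict_prefix[OF _ mono_reached_rows] by blast
  then have "reached_rows (Suc N) = reached_rows N" by (metis le_SucI order_refl)
  then show ?thesis ..
qed

text \<open>The last conjunct, that rows not yet reached are untouched, is what lets the path be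
  extended by a row entering at the next layer.\<close>

lemma augmenting_path:
  assumes "j \<in> free_cols (reached_rows k)"
  shows "\<exists>A' i0. i0 \<in> reached_rows 0 \<and> augments n A A' i0 j
           \<and> (\<forall>p<n. p \<notin> reached_rows k \<longrightarrow> (\<forall>q<n. A' p q = A p q))"
  using assms
proof (induction k arbitrary: j)
  case 0
  then obtain i where i: "i \<in> reached_rows 0" "i \<noteq> j" "A i j = 0" "j < n"
    unfolding free_cols_def by auto
  then have "augments n A (\<lambda>p q. A p q + of_bool (p = i \<and> q = j)) i j"
    by (intro augments_set_entry loopless) auto
  with i show ?case by fastforce
next
  case (Suc k)
  then obtain i where i: "i \<in> reached_rows (Suc k)" "i \<noteq> j" "A i j = 0" "j < n"
    unfolding free_cols_def by auto
  have "i < n" using i(1) reached_rows_subset by blast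
  show ?case
  proof (cases "i \<in> reached_rows k")
    case True
    then have "j \<in> free_cols (reached_rows k)"
      using i unfolding free_cols_def by auto
    moreover have "reached_rows k \<subseteq> reached_rows (Suc k)" by auto
    ultimately show ?thesis using Suc.IH by blast
  next
    case False
    with i(1) obtain j' where j': "j' \<in> free_cols (reached_rows k)" "A i j' = 1"
      by auto
    then have "j' < n" unfolding free_cols_def by simp
    from Suc.IH[OF j'(1)] obtain A' i0 where A': "i0 \<in> reached_rows 0" "augments n A A' i0 j'"
      "\<forall>p<n. p \<notin> reached_rows k \<longrightarrow> (\<forall>q<n. A' p q = A p q)"
      by blast
    let ?A'' = "\<lambda>p q. if p = i \<and> q = j then 1 else if p = i \<and> q = j' then 0 else A' p q"
    have "A' i j' = 1" "A' i j = 0"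
      using A'(3) False \<open>i < n\<close> \<open>j' < n\<close> i j' by auto
    then have "augments n A ?A'' i0 j"
      using A'(2) \<open>i < n\<close> \<open>j < n\<close> \<open>j' < n\<close> i(2) by (intro augments_shift_column)
    moreover have "?A'' p q = A p q" if "p < n" "p \<notin> reached_rows (Suc k)" "q < n" for p q
      using A'(3) i(1) that by auto
    ultimately show ?thesis using A'(1) by blast
  qed
qed

end

lemma deficient_block_bound:
  fixes x z w M aX bY bZ :: nat
  assumes "x * z + bY < aX + w" and "w \<le> x" "w \<le> z"
    and "aX \<le> x * M" "aX \<le> bY + bZ" "bZ \<le> z * M"
  shows "bY + bZ < M * (M + 1)"
proof (cases "M < z")
  case True
  then have "x * (M + 1) \<le> x * z" by (intro mult_le_mono2) simp
  with assms show ?thesis by (simp add: algebra_simps)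
next
  case z_le: False
  show ?thesis
  proof (cases "M < x")
    case True
    then have "(M + 1) * z \<le> x * z" by (intro mult_le_mono1) simp
    with assms show ?thesis by (simp add: algebra_simps)
  next
    case False
    then have "0 \<le> (int M - int x) * (int M - int z)"
      using z_le by simp
    then have "int x * int M + int z * int M \<le> int M * int M + int x * int z"
      by (simp add: algebra_simps)
    then have "x * M + z * M \<le> M * M + x * z"
      by (simp flip: of_nat_mult of_nat_add)
    then show ?thesis using assms False by (simp add: algebra_simps)
  qed
qed

locale maximal_partial_realization = partial_realization +
  assumes maximal: "\<And>A'. partial_realization n a b A' \<Longrightarrow> total n A' \<le> total n A"
begin

lemma free_cols_saturated:
  assumes "j \<in> free_cols (reached_rows k)"
  shows "col_sum n A j = b j"
proof (rule ccontr)
  assume "col_sum n A j \<noteq> b j"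
  moreover have "j < n" using assms unfolding free_cols_def by simp
  ultimately have col_deficient: "col_sum n A j < b j"
    using col_sum_le le_neq_implies_less by blast
  obtain A' i0 where "i0 \<in> reached_rows 0" and aug: "augments n A A' i0 j"
    using augmenting_path[OF assms] by blast
  then have "i0 < n" and row_deficient: "row_sum n A i0 < a i0" by auto
  have "partial_realization n a b A'"
  proof
    show "loopless_01 n A'" using aug by (simp add: augments_def)
  next
    show "row_sum n A' i \<le> a i" if "i < n" for i
      using aug that row_sum_le row_deficient by (auto simp: augments_def Suc_leI)
  next
    show "col_sum n A' q \<le> b q" if "q < n" for q
      using aug that col_sum_le col_deficient by (auto simp: augments_def Suc_leI)
  qed
  with maximal total_augments[OF aug \<open>i0 < n\<close>] show False by fastforce
qed

lemma stable_reach_deficit: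
  assumes stable: "reached_rows (Suc N) = reached_rows N" and "reached_rows 0 \<noteq> {}"
  defines "X \<equiv> reached_rows N" and "Y \<equiv> free_cols (reached_rows N)" and "Z \<equiv> {..<n} - free_cols (reached_rows N)"
  shows "card X * card Z + (\<Sum>j\<in>Y. b j) < (\<Sum>i\<in>X. a i) + card (X \<inter> Z)"
proof -
  have X: "X \<subseteq> {..<n}" unfolding X_def by (rule reached_rows_subset)
  have Y: "Y \<subseteq> {..<n}" unfolding Y_def free_cols_def by auto
  have ones: "A p q = 1" if "p \<in> X" "q < n" "q \<notin> Y" "p \<noteq> q" for p q
  proof -
    have "A p q \<noteq> 0" using that unfolding X_def Y_def free_cols_def by auto
    moreover have "A p q \<le> 1" using loopless that X by (auto simp: loopless_01_def)
    ultimately show ?thesis by simp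
  qed
  have zeros: "A p q = 0" if "p < n" "p \<notin> X" "q \<in> Y" for p q
  proof (rule ccontr)
    assume "A p q \<noteq> 0"
    moreover have "A p q \<le> 1" using loopless that Y by (auto simp: loopless_01_def)
    ultimately have "A p q = 1" by simp
    with that have "p \<in> reached_rows (Suc N)" unfolding X_def Y_def by auto
    with stable \<open>p \<notin> X\<close> show False unfolding X_def by simp
  qed
  have "(\<Sum>i\<in>X. row_sum n A i) < (\<Sum>i\<in>X. a i)"
  proof -
    obtain i0 where "i0 \<in> reached_rows 0" using assms(2) by blast
    moreover have "reached_rows 0 \<subseteq> X" unfolding X_def by (rule monoD[OF mono_reached_rows]) simp
    ultimately show ?thesis
      using X row_sum_le finite_subset[OF X] by (intro sum_strict_mono_ex1) auto
  qed
  moreover have "(\<Sum>j\<in>Y. col_sum n A j) = (\<Sum>j\<in>Y. b j)"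
    unfolding Y_def using free_cols_saturated by simp
  ultimately show ?thesis
    using block_count[OF loopless X Y ones zeros] unfolding Z_def Y_def [symmetric] by linarith
qed

lemma row_sum_eq_if_pronic_le:
  assumes a_le: "\<And>i. i < n \<Longrightarrow> a i \<le> M" and b_le: "\<And>j. j < n \<Longrightarrow> b j \<le> M"
    and sums: "(\<Sum>i<n. a i) = (\<Sum>j<n. b j)" and pronic: "M * (M + 1) \<le> (\<Sum>j<n. b j)"
    and "i < n"
  shows "row_sum n A i = a i"
proof (rule ccontr)
  assume "row_sum n A i \<noteq> a i"
  with row_sum_le \<open>i < n\<close> have "i \<in> reached_rows 0" by (simp add: order_less_le)
  obtain N where stable: "reached_rows (Suc N) = reached_rows N"
    using reached_rows_stable ..
  define X where "X = reached_rows N"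
  define Y where "Y = free_cols (reached_rows N)"
  define Z where "Z = {..<n} - Y"
  have X: "X \<subseteq> {..<n}" unfolding X_def by (rule reached_rows_subset)
  have Y: "Y \<subseteq> {..<n}" unfolding Y_def free_cols_def by auto
  have deficit: "card X * card Z + (\<Sum>j\<in>Y. b j) < (\<Sum>i\<in>X. a i) + card (X \<inter> Z)"
    using stable_reach_deficit[OF stable] \<open>i \<in> reached_rows 0\<close>
    unfolding X_def Y_def Z_def by blast
  have split_b: "(\<Sum>j<n. b j) = (\<Sum>j\<in>Y. b j) + (\<Sum>j\<in>Z. b j)"
    unfolding Z_def using Y by (simp add: sum.subset_diff)
  have "card (X \<inter> Z) \<le> card X" "card (X \<inter> Z) \<le> card Z"
    using X unfolding Z_def by (auto intro: card_mono finite_subset)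
  moreover have "(\<Sum>i\<in>X. a i) \<le> card X * M"
    using X a_le sum_bounded_above[of X a M] by auto
  moreover have "(\<Sum>i\<in>X. a i) \<le> (\<Sum>j\<in>Y. b j) + (\<Sum>j\<in>Z. b j)"
    using X sum_mono2[of "{..<n}" X a] sums split_b by auto
  moreover have "(\<Sum>j\<in>Z. b j) \<le> card Z * M"
    using b_le sum_bounded_above[of Z b M] unfolding Z_def by auto
  ultimately have "(\<Sum>j<n. b j) < M * (M + 1)"
    unfolding split_b by (rule deficient_block_bound[OF deficit])
  with pronic show False by simp
qed

end

lemma ex_maximal_partial_realization: "\<exists>A. maximal_partial_realization n a b A"
proof -
  define V where "V = total n ` {A. partial_realization n a b A}"
  have "total n A \<le> (\<Sum>i<n. a i)" if "partial_realization n a b A" for A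
    using partial_realization.row_sum_le[OF that] unfolding total_def by (intro sum_mono) simp
  then have "V \<subseteq> {..\<Sum>i<n. a i}" unfolding V_def by auto
  then have "finite V" by (rule finite_subset) simp
  have "partial_realization n a b (\<lambda>_ _. 0)"
    by unfold_locales (simp_all add: loopless_01_def row_sum_def col_sum_def)
  then have "V \<noteq> {}" unfolding V_def by blast
  then obtain A where A: "partial_realization n a b A" "total n A = Max V"
    using Max_in[OF \<open>finite V\<close>] unfolding V_def by auto
  have "total n A' \<le> total n A" if "partial_realization n a b A'" for A'
    using that A(2) Max_ge[OF \<open>finite V\<close>] unfolding V_def by simp
  with A(1) have "maximal_partial_realization n a b A"
    by (simp add: maximal_partial_realization_def maximal_partial_realization_axioms_def)
  then show ?thesis by blast
qed

theorem graphic_if_pronic_le_sum: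
  assumes sums: "(\<Sum>i<n. a i) = (\<Sum>i<n. b i)"
    and a_le: "\<And>i. i < n \<Longrightarrow> a i \<le> M" and b_le: "\<And>i. i < n \<Longrightarrow> b i \<le> M"
    and pronic: "M * (M + 1) \<le> (\<Sum>i<n. a i)"
  shows "graphic n a b"
proof -
  obtain A where "maximal_partial_realization n a b A"
    using ex_maximal_partial_realization by blast
  then interpret maximal_partial_realization n a b A .
  have rows: "row_sum n A i = a i" if "i < n" for i
    using row_sum_eq_if_pronic_le[OF a_le b_le _ _ that] sums pronic by simp
  then have "(\<Sum>j<n. col_sum n A j) = (\<Sum>j<n. b j)"
    using sums by (simp flip: total_eq_sum_col_sum add: total_def)
  then have "col_sum n A j = b j" if "j < n" for j
    using sum_mono_inv[of "col_sum n A" "{..<n}" b] col_sum_le that by auto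
  with loopless rows show ?thesis by (rule graphicI)
qed

lemma le_max_bideg:
  assumes "i < n"
  shows "a i \<le> max_bideg n a b" and "b i \<le> max_bideg n a b"
  using assms unfolding max_bideg_def by (auto intro: Max_ge)

theorem corollary3:
  fixes n :: nat and a b :: "nat \<Rightarrow> nat"
  assumes sums: "(\<Sum>i<n. a i) = (\<Sum>i<n. b i)"
    and M_lt: "max_bideg n a b < n"
  shows "(max_bideg n a b < card {i. i < n \<and> a i = max_bideg n a b} \<longrightarrow> graphic n a b)
       \<and> (\<forall>k::nat. max_bideg n a b < k \<and> max_bideg n a b * k \<le> (\<Sum>i<n. a i) \<longrightarrow> graphic n a b)"
proof -
  define M where "M = max_bideg n a b"
  have graphic: "graphic n a b" if "M * (M + 1) \<le> (\<Sum>i<n. a i)"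
    using graphic_if_pronic_le_sum[OF sums _ _ that] le_max_bideg unfolding M_def by blast
  have "graphic n a b" if "M < k" "M * k \<le> (\<Sum>i<n. a i)" for k
  proof -
    have "M * (M + 1) \<le> M * k" using \<open>M < k\<close> by (intro mult_le_mono2) simp
    with \<open>M * k \<le> _\<close> show ?thesis by (intro graphic) linarith
  qed
  moreover have "graphic n a b" if "M < card {i. i < n \<and> a i = M}"
  proof -
    let ?K = "{i. i < n \<and> a i = M}"
    have "M * (M + 1) \<le> M * card ?K" using that by (intro mult_le_mono2) simp
    also have "\<dots> = (\<Sum>i\<in>?K. a i)" by simp
    also have "\<dots> \<le> (\<Sum>i<n. a i)" by (intro sum_mono2) auto
    finally show ?thesis by (rule graphic)
  qed
  ultimately show ?thesis unfolding M_def by blast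
qed

end
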